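(* Let $q$ be a power of an odd prime, write $q-1=2^s r$ with $r$ odd, and let $c\in\mathbb{F}_q^*$. The functional graph of $f(X)=c(X^{q+1}+X^2)$ over $\mathbb{F}_{q^2}$ is isomorphic to $$\mathscr{Z}^*(q)\ \oplus\ \bigoplus_{d\mid r}\frac{q\,\varphi(d)}{\mathrm{ord}_{d}(2)}\times\big(Cyc(\mathrm{ord}_{d}(2)),\mathscr{T}(s)\big).$$
   Context: The functional graph of a map $f:\mathbb{F}_{q^2}\to\mathbb{F}_{q^2}$ is the directed graph with vertex set $\mathbb{F}_{q^2}$ and an edge $x\to f(x)$ for every $x$. $Cyc(n)$ is the directed cycle of length $n$. $\mathscr{T}(1)$ is the tree with two vertices $P_1,P$ and the edge $P_1\to P$ (root $P$); for $m\ge1$, $\mathscr{T}(m+1)$ is obtained from $\mathscr{T}(m)$ by attaching two new vertices, each with an edge directed to it, to every vertex of the last (top) level of $\mathscr{T}(m)$. $(Cyc(n),\mathscr{T}(m))$ is the graph obtained from $Cyc(n)$ by replacing each vertex of the cycle by a copy of $\mathscr{T}(m)$ whose root is that cycle vertex. $\mathscr{Z}^*(q)$ is the graph consisting of a vertex with a loop ($Cyc(1)$) to which $q-1$ copies of $\mathscr{T}(1)$ are attached, the root of each copy being identified with the fixed vertex (i.e. a fixed vertex with $q-1$ further vertices pointing to it, which have no preimages). $\oplus$ denotes disjoint union and $k\times G$ denotes $k$ disjoint copies of $G$. $\varphi$ is Euler's totient function and $\mathrm{ord}_m(n)$ is the multiplicative order of $n$ modulo $m$ (with $\mathrm{ord}_1(2)=1$).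 *)

theory Defs
  imports "HOL-Number_Theory.Number_Theory"
begin

definition fg_iso :: "'a set \<Rightarrow> ('a \<Rightarrow> 'a) \<Rightarrow> 'b set \<Rightarrow> ('b \<Rightarrow> 'b) \<Rightarrow> bool" where
  "fg_iso V f W g \<longleftrightarrow> (\<exists>h. bij_betw h V W \<and> (\<forall>x\<in>V. h (f x) = g (h x)))"

text \<open>The tree T(m): root None (=P), Some [] (=P1) points to the root, and a vertex
  Some (b # xs) points to Some xs; vertices Some xs with length xs < m.
  Level i (i>=1) consists of the Some xs with length xs = i - 1.\<close>
definition tree_verts :: "nat \<Rightarrow> bool list option set" where
  "tree_verts m = insert None (Some ` {xs. length xs < m})"

fun tree_map :: "bool list option \<Rightarrow> bool list option" where
  "tree_map None = None"
| "tree_map (Some []) = None"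
| "tree_map (Some (b # xs)) = Some xs"

text \<open>(Cyc(n), T(m)): cycle vertices (j, None), j < n, with j -> j+1 mod n; a copy of T(m)
  rooted at each cycle vertex.\<close>
definition cyctree_verts :: "nat \<Rightarrow> nat \<Rightarrow> (nat \<times> bool list option) set" where
  "cyctree_verts n m = {0..<n} \<times> tree_verts m"

definition cyctree_map :: "nat \<Rightarrow> nat \<times> bool list option \<Rightarrow> nat \<times> bool list option" where
  "cyctree_map n x = (case x of (j, None) \<Rightarrow> (Suc j mod n, None) | (j, v) \<Rightarrow> (j, tree_map v))"

definition zstar_verts :: "nat \<Rightarrow> nat set" where
  "zstar_verts q = {0..<q}"

definition zstar_map :: "nat \<Rightarrow> nat" where
  "zstar_map i = 0"

text \<open>The graph Z*(q) (+) disjoint union over d | r of (q phi(d) / ord_d 2) copies of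
  (Cyc(ord_d 2), T(s)). A copy is indexed by (d, k) with k < q phi(d) / ord_d 2.\<close>
definition target_verts :: "nat \<Rightarrow> nat \<Rightarrow> nat \<Rightarrow> (nat + nat \<times> nat \<times> nat \<times> bool list option) set" where
  "target_verts q s r = Inl ` zstar_verts q \<union>
     Inr ` {(d, k, x). d dvd r \<and> k < q * totient d div ord d 2 \<and> x \<in> cyctree_verts (ord d 2) s}"

fun target_map :: "nat \<Rightarrow> nat \<Rightarrow> nat + nat \<times> nat \<times> nat \<times> bool list option \<Rightarrow> nat + nat \<times> nat \<times> nat \<times> bool list option" where
  "target_map q s (Inl i) = Inl (zstar_map i)"
| "target_map q s (Inr (d, k, x)) = Inr (d, k, cyctree_map (ord d 2) x)"

end

theory Submission
  imports Defs "HOL-Library.Disjoint_Sets" "HOL-Computational_Algebra.Polynomial"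
    "HOL-Decision_Procs.Algebra_Aux"
begin

(* Write Tr x = x^q + x; it takes values in F_q = {a. a^q = a}. Since f x = c * x * Tr x, the
   q points of trace zero are sent to 0, which gives Z*(q), while x |-> (c * Tr x, x / (c * Tr x))
   identifies the other points with F_q^* x L, where L = Tr^-1 (1/c) has q elements, and turns f
   into (a, w) |-> (a^2, w). As F_q^* is cyclic of order q - 1 = 2^s r, squaring on it is doubling
   on Z/(2^s r). By the Chinese remainder theorem this is doubling on Z/r with a copy of T(s)
   (which is doubling on Z/2^s) attached at every point. Finally, doubling permutes Z/r, and the
   phi(d) residues y with r / gcd(y, r) = d lie on cycles of length ord_d(2). *)

section \<open>Isomorphisms of functional graphs\<close>

lemma bij_betw_of_inj_on_card:
  assumes "inj_on h A" "h ` A \<subseteq> B" "finite B" "card A = card B"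
  shows "bij_betw h A B"
  by (metis assms bij_betw_imageI card_image card_subset_eq)

lemma fg_isoI:
  "bij_betw h V W \<Longrightarrow> (\<And>x. x \<in> V \<Longrightarrow> h (f x) = g (h x)) \<Longrightarrow> fg_iso V f W g"
  unfolding fg_iso_def by blast

lemma fg_iso_card: "fg_iso V f W g \<Longrightarrow> card V = card W"
  unfolding fg_iso_def by (auto intro: bij_betw_same_card)

lemma fg_iso_refl: "fg_iso V f V f"
  by (rule fg_isoI[OF bij_betw_id]) simp

lemma fg_iso_trans [trans]:
  assumes "fg_iso U f V g" "fg_iso V g W k"
  shows "fg_iso U f W k"
proof -
  obtain h1 where h1: "bij_betw h1 U V" "\<And>x. x \<in> U \<Longrightarrow> h1 (f x) = g (h1 x)"
    using assms(1) unfolding fg_iso_def by blast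
  obtain h2 where h2: "bij_betw h2 V W" "\<And>y. y \<in> V \<Longrightarrow> h2 (g y) = k (h2 y)"
    using assms(2) unfolding fg_iso_def by blast
  show ?thesis
    by (rule fg_isoI[OF bij_betw_trans[OF h1(1) h2(1)]])
      (use h1 h2(2) bij_betwE in fastforce)
qed

lemma fg_iso_sym:
  assumes "fg_iso V f W g" and "f ` V \<subseteq> V"
  shows "fg_iso W g V f"
proof -
  obtain h where h: "bij_betw h V W" "\<And>x. x \<in> V \<Longrightarrow> h (f x) = g (h x)"
    using assms(1) unfolding fg_iso_def by blast
  show ?thesis
  proof (rule fg_isoI[OF bij_betw_inv_into[OF h(1)]])
    fix y assume "y \<in> W"
    then obtain x where x: "x \<in> V" "y = h x"
      using h(1) by (auto simp: bij_betw_def)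
    have "inv_into V h (g y) = inv_into V h (h (f x))"
      using h(2) x by simp
    also have "\<dots> = f x"
      using assms(2) x h(1) by (auto simp: bij_betw_def)
    also have "\<dots> = f (inv_into V h y)"
      using x h(1) by (simp add: bij_betw_def)
    finally show "inv_into V h (g y) = f (inv_into V h y)" .
  qed
qed

lemma fg_iso_map_prod:
  assumes "fg_iso A f B g" and "fg_iso C f' D g'"
  shows "fg_iso (A \<times> C) (map_prod f f') (B \<times> D) (map_prod g g')"
proof -
  obtain h where h: "bij_betw h A B" "\<And>x. x \<in> A \<Longrightarrow> h (f x) = g (h x)"
    using assms(1) unfolding fg_iso_def by blast
  obtain h' where h': "bij_betw h' C D" "\<And>x. x \<in> C \<Longrightarrow> h' (f' x) = g' (h' x)"
    using assms(2) unfolding fg_iso_def by blast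
  show ?thesis
    by (rule fg_isoI[OF bij_betw_map_prod[OF h(1) h'(1)]]) (auto simp: h(2) h'(2))
qed

lemma fg_iso_map_sum:
  assumes "fg_iso A f B g" and "fg_iso C f' D g'"
  shows "fg_iso (Inl ` A \<union> Inr ` C) (map_sum f f') (Inl ` B \<union> Inr ` D) (map_sum g g')"
proof -
  obtain h where h: "bij_betw h A B" "\<And>x. x \<in> A \<Longrightarrow> h (f x) = g (h x)"
    using assms(1) unfolding fg_iso_def by blast
  obtain h' where h': "bij_betw h' C D" "\<And>x. x \<in> C \<Longrightarrow> h' (f' x) = g' (h' x)"
    using assms(2) unfolding fg_iso_def by blast
  have "bij_betw (map_sum h h') (Inl ` A \<union> Inr ` C) (Inl ` B \<union> Inr ` D)"
  proof (rule bij_betw_imageI)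
    show "inj_on (map_sum h h') (Inl ` A \<union> Inr ` C)"
      using h(1) h'(1) unfolding bij_betw_def inj_on_def by (auto 0 0)
    have "map_sum h h' ` (Inl ` A \<union> Inr ` C) = Inl ` h ` A \<union> Inr ` h' ` C"
      by (simp add: image_Un image_image)
    then show "map_sum h h' ` (Inl ` A \<union> Inr ` C) = Inl ` B \<union> Inr ` D"
      using h(1) h'(1) by (simp add: bij_betw_def)
  qed
  then show ?thesis
  proof (rule fg_isoI)
    fix x assume "x \<in> Inl ` A \<union> Inr ` C"
    then show "map_sum h h' (map_sum f f' x) = map_sum g g' (map_sum h h' x)"
      using h(2) h'(2) by (elim UnE imageE) simp_all
  qed
qed

lemma fg_iso_Pair: "fg_iso A (g i) (Pair i ` A) (\<lambda>(j, a). (j, g j a))"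
  by (rule fg_isoI[OF bij_betw_imageI[of "Pair i"]]) (auto simp: inj_on_def)

lemma fg_iso_UN:
  assumes iso: "\<And>i. i \<in> I \<Longrightarrow> fg_iso (V i) f (W i) g"
    and index: "\<And>i x. i \<in> I \<Longrightarrow> x \<in> V i \<Longrightarrow> idx x = i"
    and closed: "\<And>i. i \<in> I \<Longrightarrow> f ` V i \<subseteq> V i"
    and disjoint: "disjoint_family_on W I"
  shows "fg_iso (\<Union>i\<in>I. V i) f (\<Union>i\<in>I. W i) g"
proof -
  have "\<forall>i\<in>I. \<exists>h. bij_betw h (V i) (W i) \<and> (\<forall>x\<in>V i. h (f x) = g (h x))"
    using iso unfolding fg_iso_def by blast
  then obtain H where H: "\<And>i. i \<in> I \<Longrightarrow> bij_betw (H i) (V i) (W i)"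
    "\<And>i x. i \<in> I \<Longrightarrow> x \<in> V i \<Longrightarrow> H i (f x) = g (H i x)"
    by metis
  have "bij_betw (\<lambda>x. H (idx x) x) (V i) (W i)" if "i \<in> I" for i
    using H(1)[OF that] bij_betw_cong[of "V i" "\<lambda>x. H (idx x) x" "H i"] index[OF that] by simp
  then have "bij_betw (\<lambda>x. H (idx x) x) (\<Union>i\<in>I. V i) (\<Union>i\<in>I. W i)"
    by (rule bij_betw_UNION_disjoint[OF disjoint])
  then show ?thesis
  proof (rule fg_isoI)
    fix x assume "x \<in> (\<Union>i\<in>I. V i)"
    then obtain i where i: "i \<in> I" "x \<in> V i"
      by blast
    then have "idx (f x) = i" "idx x = i"
      using index closed by (auto simp: image_subset_iff)
    then show "H (idx (f x)) (f x) = g (H (idx x) x)"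
      using H(2)[OF i] by simp
  qed
qed

section \<open>Attaching trees to a functional graph\<close>

text \<open>The graph (G, T(s)) for the functional graph G of \<open>\<sigma>\<close>: each vertex x of G becomes the root
  \<open>(x, None)\<close> of a copy of T(s).\<close>
definition attach_trees :: "('b \<Rightarrow> 'b) \<Rightarrow> 'b \<times> bool list option \<Rightarrow> 'b \<times> bool list option" where
  "attach_trees \<sigma> = (\<lambda>(x, t). (if t = None then \<sigma> x else x, tree_map t))"

lemma tree_map_tree_verts: "t \<in> tree_verts s \<Longrightarrow> tree_map t \<in> tree_verts s"
  by (cases t rule: tree_map.cases) (auto simp: tree_verts_def)

lemma attach_trees_closed:
  "\<sigma> ` P \<subseteq> P \<Longrightarrow> attach_trees \<sigma> ` (P \<times> tree_verts s) \<subseteq> P \<times> tree_verts s"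
  by (auto simp: attach_trees_def tree_map_tree_verts)

lemma cyctree_map_eq_attach_trees: "cyctree_map n = attach_trees (\<lambda>j. Suc j mod n)"
  by (auto simp: fun_eq_iff cyctree_map_def attach_trees_def split: option.split)

lemma fg_iso_attach_trees:
  assumes "fg_iso P \<sigma> Q \<tau>"
  shows "fg_iso (P \<times> tree_verts s) (attach_trees \<sigma>) (Q \<times> tree_verts s) (attach_trees \<tau>)"
proof -
  obtain h where h: "bij_betw h P Q" "\<And>x. x \<in> P \<Longrightarrow> h (\<sigma> x) = \<tau> (h x)"
    using assms unfolding fg_iso_def by blast
  show ?thesis
    by (rule fg_isoI[OF bij_betw_map_prod[OF h(1) bij_betw_id]])
      (auto simp: attach_trees_def h(2))
qed

lemma fg_iso_attach_trees_param:
  "fg_iso ((P \<times> T) \<times> W) (map_prod (attach_trees \<sigma>) id)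
          ((P \<times> W) \<times> T) (attach_trees (map_prod \<sigma> id))"
  by (rule fg_isoI[where h = "\<lambda>((x, t), w). ((x, w), t)"],
      rule bij_betw_byWitness[where f' = "\<lambda>((x, w), t). ((x, t), w)"])
    (auto simp: attach_trees_def)

lemma fg_iso_attach_trees_assoc:
  "fg_iso ((A \<times> B) \<times> T) (attach_trees (map_prod id \<beta>))
          (A \<times> (B \<times> T)) (map_prod id (attach_trees \<beta>))"
  by (rule fg_isoI[where h = "\<lambda>((a, b), t). (a, (b, t))"],
      rule bij_betw_byWitness[where f' = "\<lambda>(a, (b, t)). ((a, b), t)"])
    (auto simp: attach_trees_def)


section \<open>The tree T(s) and doubling modulo \<open>2 ^ s\<close>\<close>

fun bits_value :: "bool list \<Rightarrow> nat" where
  "bits_value [] = 0"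
| "bits_value (b # bs) = (if b then 2 ^ length bs else 0) + bits_value bs"

lemma bits_value_less: "bits_value bs < 2 ^ length bs"
  by (induction bs) auto

lemma bits_value_inj: "length bs = length cs \<Longrightarrow> bits_value bs = bits_value cs \<Longrightarrow> bs = cs"
proof (induction bs arbitrary: cs)
  case (Cons b bs)
  then obtain c cs' where cs: "cs = c # cs'" "length cs' = length bs"
    by (cases cs) auto
  have "b = c"
    using Cons.prems bits_value_less[of bs] bits_value_less[of cs'] cs by (auto split: if_splits)
  moreover have "bits_value bs = bits_value cs'"
    using Cons.prems \<open>b = c\<close> unfolding cs(1) bits_value.simps cs(2) by simp
  ultimately show ?case
    using Cons.IH[of cs'] cs by simp
qed simp

lemma pow2_mult_odd_inj:
  fixes a b m n :: nat
  assumes "2 ^ a * (2 * m + 1) = 2 ^ b * (2 * n + 1)"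
  shows "a = b \<and> m = n"
  using assms
proof (induction a arbitrary: b)
  case 0
  then show ?case
    by (cases b) (auto dest: arg_cong[where f = even])
next
  case (Suc a)
  then obtain b' where b: "b = Suc b'"
    by (cases b) (auto dest: arg_cong[where f = even])
  then have "2 ^ a * (2 * m + 1) = 2 ^ b' * (2 * n + 1)"
    using Suc.prems by (simp only: power_Suc mult.assoc mult_cancel_left) simp
  then show ?case
    using Suc.IH b by simp
qed

definition tree_depth :: "bool list option \<Rightarrow> nat" where
  "tree_depth t = (case t of None \<Rightarrow> 0 | Some bs \<Rightarrow> Suc (length bs))"

text \<open>A vertex of level \<open>i\<close> of T(s) is coded by a number of 2-adic valuation \<open>s - i\<close>, the root
  by 0; doubling modulo \<open>2 ^ s\<close> then moves one level down.\<close>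
definition tree_code :: "nat \<Rightarrow> bool list option \<Rightarrow> nat" where
  "tree_code s t =
     (case t of None \<Rightarrow> 0 | Some bs \<Rightarrow> 2 ^ (s - tree_depth t) * (2 * bits_value bs + 1))"

lemma tree_code_Some_less:
  assumes "length bs < s"
  shows "tree_code s (Some bs) < 2 ^ s"
proof -
  obtain a where s: "s = Suc (length bs + a)"
    using less_imp_Suc_add[OF assms] by blast
  have "2 * bits_value bs + 1 < 2 ^ Suc (length bs)"
    using bits_value_less[of bs] by simp
  then have "2 ^ a * (2 * bits_value bs + 1) < 2 ^ a * 2 ^ Suc (length bs)"
    by (rule mult_strict_left_mono) simp
  then show ?thesis
    by (simp add: tree_code_def tree_depth_def s power_add mult.commute)
qed

lemma tree_code_less: "t \<in> tree_verts s \<Longrightarrow> tree_code s t < 2 ^ s"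
  by (cases t) (auto simp: tree_verts_def tree_code_def[of s None] tree_code_Some_less)

lemma tree_code_tree_map:
  assumes "t \<in> tree_verts s"
  shows "tree_code s (tree_map t) = 2 * tree_code s t mod 2 ^ s"
proof (cases t rule: tree_map.cases)
  case 1
  then show ?thesis
    by (simp add: tree_code_def)
next
  case 2
  then obtain a where "s = Suc a"
    using assms by (cases s) (auto simp: tree_verts_def)
  then show ?thesis
    using 2 by (simp add: tree_code_def tree_depth_def)
next
  case (3 b bs)
  then obtain a where s: "s = a + Suc (Suc (length bs))"
    using assms by (auto simp: tree_verts_def dest!: less_imp_Suc_add)
  have "2 * tree_code s (Some (b # bs)) = tree_code s (Some bs) + (if b then 2 ^ s else 0)"
    by (simp add: tree_code_def tree_depth_def s power_add algebra_simps)
  moreover have "tree_code s (Some bs) < 2 ^ s"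
    by (rule tree_code_Some_less) (simp add: s)
  ultimately show ?thesis
    using 3 by simp
qed

lemma inj_on_tree_code: "inj_on (tree_code s) (tree_verts s)"
proof (rule inj_onI)
  fix t u assume t: "t \<in> tree_verts s" and u: "u \<in> tree_verts s"
    and eq: "tree_code s t = tree_code s u"
  show "t = u"
  proof (cases t)
    case None
    then show ?thesis
      using eq by (cases u) (auto simp: tree_code_def)
  next
    case (Some bs)
    then obtain cs where u': "u = Some cs"
      using eq by (cases u) (auto simp: tree_code_def)
    have "s - Suc (length bs) = s - Suc (length cs) \<and> bits_value bs = bits_value cs"
      using eq Some u' by (intro pow2_mult_odd_inj) (simp add: tree_code_def tree_depth_def)
    then show ?thesis
      using t u Some u' bits_value_inj by (auto simp: tree_verts_def)
  qed
qed

lemma card_tree_verts: "card (tree_verts s) = 2 ^ s"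
proof -
  have levels: "{bs :: bool list. length bs < s} = (\<Union>i\<in>{0..<s}. {bs. length bs = i})"
    by auto
  have "card {bs :: bool list. length bs < s} = (\<Sum>i=0..<s. 2 ^ i)"
    unfolding levels
    by (subst card_UN_disjoint)
      (auto simp: card_lists_length_eq[where A = UNIV, simplified]
        finite_lists_length_eq[where A = UNIV, simplified])
  also have "\<dots> = 2 ^ s - 1"
    by (rule sum_power2)
  finally have "card {bs :: bool list. length bs < s} = 2 ^ s - 1" .
  moreover have "finite {bs :: bool list. length bs < s}"
    unfolding levels by (simp add: finite_lists_length_eq[where A = UNIV, simplified])
  ultimately show ?thesis
    unfolding tree_verts_def by (simp add: card_image)
qed

lemma finite_tree_verts: "finite (tree_verts s)"
  using card_tree_verts[of s] by (simp add: card_ge_0_finite)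

lemma fg_iso_tree_verts_doubling:
  "fg_iso (tree_verts s) tree_map {0..<2 ^ s} (\<lambda>v::nat. 2 * v mod 2 ^ s)"
proof (rule fg_isoI[of "tree_code s"])
  show "bij_betw (tree_code s) (tree_verts s) {0..<2 ^ s}"
    by (rule bij_betw_of_inj_on_card)
      (use inj_on_tree_code tree_code_less card_tree_verts in auto)
next
  show "\<And>t. t \<in> tree_verts s \<Longrightarrow> tree_code s (tree_map t) = 2 * tree_code s t mod 2 ^ s"
    by (rule tree_code_tree_map)
qed


section \<open>Doubling modulo \<open>2 ^ s * r\<close>\<close>

lemma fg_iso_mult_mod_crt:
  fixes a b m :: nat
  assumes "coprime a b"
  shows "fg_iso {0..<a * b} (\<lambda>k. m * k mod (a * b))
           ({0..<a} \<times> {0..<b}) (map_prod (\<lambda>u. m * u mod a) (\<lambda>v. m * v mod b))"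
proof (rule fg_isoI[of "\<lambda>k. (k mod a, k mod b)"])
  show "bij_betw (\<lambda>k. (k mod a, k mod b)) {0..<a * b} ({0..<a} \<times> {0..<b})"
  proof (rule bij_betw_of_inj_on_card)
    show "inj_on (\<lambda>k. (k mod a, k mod b)) {0..<a * b}"
    proof (rule inj_onI)
      fix k l assume kl: "k \<in> {0..<a * b}" "l \<in> {0..<a * b}"
        and "(k mod a, k mod b) = (l mod a, l mod b)"
      then have "[k = l] (mod a)" "[k = l] (mod b)"
        by (simp_all add: cong_def)
      then have "[k = l] (mod a * b)"
        using assms by (rule coprime_cong_mult_nat)
      then show "k = l"
        using kl by (simp add: cong_less_imp_eq_nat)
    qed
  qed (auto simp: card_cartesian_product intro!: mod_less_divisor gr0I)
qed (simp add: mod_mult_right_eq mod_mod_cancel)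

lemma pow2_mult_mod_inj:
  fixes r y y' :: nat
  assumes "odd r" "y < r" "y' < r" "2 ^ k * y mod r = 2 ^ k * y' mod r"
  shows "y = y'"
proof -
  have "coprime (2 ^ k) r"
    using assms(1) by simp
  moreover have "[2 ^ k * y = 2 ^ k * y'] (mod r)"
    using assms(4) by (simp add: cong_def)
  ultimately have "[y = y'] (mod r)"
    by (simp add: cong_mult_lcancel_nat)
  then show "y = y'"
    using assms(2,3) by (simp add: cong_less_imp_eq_nat)
qed

text \<open>Multiplying the residue by \<open>2 ^ tree_depth t\<close> in advance turns the doubling of both
  coordinates into a doubling of the residue that happens only at the root.\<close>
lemma bij_betw_untwist:
  fixes r :: nat
  assumes "odd r"
  shows "bij_betw (\<lambda>(t, y). (2 ^ tree_depth t * y mod r, t))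
           (tree_verts s \<times> {0..<r}) ({0..<r} \<times> tree_verts s)"
proof (rule bij_betw_of_inj_on_card)
  show "inj_on (\<lambda>(t, y). (2 ^ tree_depth t * y mod r, t)) (tree_verts s \<times> {0..<r})"
  proof (rule inj_onI)
    fix x x' assume x: "x \<in> tree_verts s \<times> {0..<r}" "x' \<in> tree_verts s \<times> {0..<r}"
      and eq: "(\<lambda>(t, y). (2 ^ tree_depth t * y mod r, t)) x = (\<lambda>(t, y). (2 ^ tree_depth t * y mod r, t)) x'"
    obtain t y t' y' where tt: "x = (t, y)" "x' = (t', y')"
      by fastforce
    then have "t = t'" and "2 ^ tree_depth t * y mod r = 2 ^ tree_depth t * y' mod r"
      using eq by auto
    moreover have "y = y'"
      using pow2_mult_mod_inj[OF assms _ _ calculation(2)] x tt by simp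
    ultimately show "x = x'"
      using tt by simp
  qed
  show "(\<lambda>(t, y). (2 ^ tree_depth t * y mod r, t)) ` (tree_verts s \<times> {0..<r}) \<subseteq> {0..<r} \<times> tree_verts s"
    using assms by (auto intro!: mod_less_divisor gr0I)
qed (simp_all add: finite_tree_verts card_cartesian_product)

lemma fg_iso_untwist_attach_trees:
  fixes r :: nat
  assumes "odd r"
  shows "fg_iso (tree_verts s \<times> {0..<r}) (map_prod tree_map (\<lambda>y. 2 * y mod r))
           ({0..<r} \<times> tree_verts s) (attach_trees (\<lambda>y. 2 * y mod r))"
proof (rule fg_isoI[OF bij_betw_untwist[OF assms]])
  have shift: "2 ^ k * (2 * y mod r) mod r = 2 ^ Suc k * y mod r" for k y
    by (simp add: mod_mult_right_eq ac_simps)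
  fix x assume "x \<in> tree_verts s \<times> {0..<r}"
  then obtain t y where x: "x = (t, y)"
    by blast
  show "(\<lambda>(t, y). (2 ^ tree_depth t * y mod r, t)) (map_prod tree_map (\<lambda>y. 2 * y mod r) x) =
        attach_trees (\<lambda>y. 2 * y mod r) ((\<lambda>(t, y). (2 ^ tree_depth t * y mod r, t)) x)"
  proof (cases "t = None")
    case True
    then show ?thesis
      unfolding x by (simp add: attach_trees_def tree_depth_def mod_mult_right_eq)
  next
    case False
    then have "tree_depth t = Suc (tree_depth (tree_map t))"
      by (cases t rule: tree_map.cases) (auto simp: tree_depth_def)
    with False show ?thesis
      unfolding x attach_trees_def by (auto simp: shift simp del: power_Suc)
  qed
qed

lemma fg_iso_doubling_attach_trees:
  fixes r :: nat
  assumes "odd r"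
  shows "fg_iso {0..<2 ^ s * r} (\<lambda>k. 2 * k mod (2 ^ s * r))
           ({0..<r} \<times> tree_verts s) (attach_trees (\<lambda>y. 2 * y mod r))"
proof -
  have "fg_iso {0..<2 ^ s * r} (\<lambda>k. 2 * k mod (2 ^ s * r))
          ({0..<2 ^ s} \<times> {0..<r}) (map_prod (\<lambda>v::nat. 2 * v mod 2 ^ s) (\<lambda>y. 2 * y mod r))"
    by (rule fg_iso_mult_mod_crt) (use assms in simp)
  also have "fg_iso ({0..<2 ^ s} \<times> {0..<r}) (map_prod (\<lambda>v::nat. 2 * v mod 2 ^ s) (\<lambda>y. 2 * y mod r))
               (tree_verts s \<times> {0..<r}) (map_prod tree_map (\<lambda>y. 2 * y mod r))"
    by (intro fg_iso_map_prod fg_iso_sym[OF fg_iso_tree_verts_doubling] fg_iso_refl)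
      (auto simp: tree_map_tree_verts)
  also have "fg_iso (tree_verts s \<times> {0..<r}) (map_prod tree_map (\<lambda>y. 2 * y mod r))
               ({0..<r} \<times> tree_verts s) (attach_trees (\<lambda>y. 2 * y mod r))"
    by (rule fg_iso_untwist_attach_trees[OF assms])
  finally show ?thesis .
qed

section \<open>Permutations whose cycles all have the same length\<close>

definition funpow_orbit :: "('a \<Rightarrow> 'a) \<Rightarrow> 'a \<Rightarrow> 'a set" where
  "funpow_orbit \<sigma> x = range (\<lambda>j. (\<sigma> ^^ j) x)"

lemma funpow_in_funpow_orbit: "(\<sigma> ^^ j) x \<in> funpow_orbit \<sigma> x"
  unfolding funpow_orbit_def by (rule rangeI)

lemma self_in_funpow_orbit: "x \<in> funpow_orbit \<sigma> x"
  using funpow_in_funpow_orbit[where j = 0] by simp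

lemma funpow_orbit_eq:
  assumes period: "(\<sigma> ^^ n) x = x" and "n > 0" and y: "y \<in> funpow_orbit \<sigma> x"
  shows "funpow_orbit \<sigma> y = funpow_orbit \<sigma> x"
proof -
  obtain j where j: "y = (\<sigma> ^^ j) x"
    using y unfolding funpow_orbit_def by blast
  have "(\<sigma> ^^ ((n - 1) * j)) y = (\<sigma> ^^ ((n - 1) * j + j)) x"
    by (simp add: j funpow_add)
  also have "(n - 1) * j + j = n * j"
    using \<open>n > 0\<close> by (cases n) auto
  also have "(\<sigma> ^^ (n * j)) x = x"
    using funpow_mod_eq[OF period, where m = "n * j"] by simp
  finally have return: "(\<sigma> ^^ ((n - 1) * j)) y = x" .
  have "(\<sigma> ^^ i) y \<in> funpow_orbit \<sigma> x" for i
    unfolding funpow_orbit_def j by (metis funpow_add comp_apply rangeI)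
  moreover have "(\<sigma> ^^ i) x \<in> funpow_orbit \<sigma> y" for i
    unfolding funpow_orbit_def by (metis funpow_add comp_apply rangeI return)
  ultimately show ?thesis
    unfolding funpow_orbit_def by blast
qed

locale equal_cycles =
  fixes \<sigma> :: "'a \<Rightarrow> 'a" and P :: "'a set" and n :: nat
  assumes closed: "\<sigma> ` P \<subseteq> P" and length_pos: "n > 0"
    and period: "\<And>x. x \<in> P \<Longrightarrow> (\<sigma> ^^ n) x = x"
    and primitive: "\<And>x j. x \<in> P \<Longrightarrow> 0 < j \<Longrightarrow> j < n \<Longrightarrow> (\<sigma> ^^ j) x \<noteq> x"
begin

definition orbit_rep :: "'a \<Rightarrow> 'a" where
  "orbit_rep x = (SOME y. y \<in> funpow_orbit \<sigma> x)"

lemma funpow_closed: "x \<in> P \<Longrightarrow> (\<sigma> ^^ j) x \<in> P"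
  using closed by (induction j) auto

lemma orbit_rep_in_orbit: "orbit_rep x \<in> funpow_orbit \<sigma> x"
  unfolding orbit_rep_def using self_in_funpow_orbit by (rule someI)

lemma orbit_rep_in:
  assumes "x \<in> P"
  shows "orbit_rep x \<in> P"
proof -
  obtain j where "orbit_rep x = (\<sigma> ^^ j) x"
    using orbit_rep_in_orbit[of x] unfolding funpow_orbit_def by blast
  then show ?thesis
    using funpow_closed[OF assms] by simp
qed

lemma funpow_orbit_rep: "x \<in> P \<Longrightarrow> funpow_orbit \<sigma> ((\<sigma> ^^ i) (orbit_rep x)) = funpow_orbit \<sigma> x"
  using funpow_orbit_eq[OF period[OF orbit_rep_in] length_pos funpow_in_funpow_orbit]
    funpow_orbit_eq[OF period length_pos orbit_rep_in_orbit] by simp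

lemma funpow_eq_imp_eq:
  assumes "x \<in> P" "i < n" "j < n" "(\<sigma> ^^ i) x = (\<sigma> ^^ j) x"
  shows "i = j"
proof -
  have no_repeat: False if "i < j" "j < n" "(\<sigma> ^^ i) x = (\<sigma> ^^ j) x" for i j
  proof -
    have "(\<sigma> ^^ (j - i)) ((\<sigma> ^^ i) x) = (\<sigma> ^^ (j - i + i)) x"
      by (simp only: funpow_add comp_apply)
    also have "\<dots> = (\<sigma> ^^ i) x"
      using that(1,3) by simp
    finally have "(\<sigma> ^^ (j - i)) ((\<sigma> ^^ i) x) = (\<sigma> ^^ i) x" .
    moreover have "(\<sigma> ^^ (j - i)) ((\<sigma> ^^ i) x) \<noteq> (\<sigma> ^^ i) x"
      by (rule primitive) (use funpow_closed[OF \<open>x \<in> P\<close>] that(1,2) in auto)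
    ultimately show False
      by (rule notE[rotated])
  qed
  show "i = j"
    using assms(2-4) no_repeat[of i j] no_repeat[of j i] by (cases i j rule: linorder_cases) auto
qed

lemma inj_on_orbit_reps: "inj_on (\<lambda>(\<rho>, j). (\<sigma> ^^ j) \<rho>) (orbit_rep ` P \<times> {0..<n})"
proof (rule inj_onI)
  fix a b assume "a \<in> orbit_rep ` P \<times> {0..<n}" "b \<in> orbit_rep ` P \<times> {0..<n}"
    and eq_ab: "(\<lambda>(\<rho>, j). (\<sigma> ^^ j) \<rho>) a = (\<lambda>(\<rho>, j). (\<sigma> ^^ j) \<rho>) b"
  then obtain x i x' j where ab: "a = (orbit_rep x, i)" "b = (orbit_rep x', j)"
    and x: "x \<in> P" "i < n" "x' \<in> P" "j < n"
    by auto
  have eq: "(\<sigma> ^^ i) (orbit_rep x) = (\<sigma> ^^ j) (orbit_rep x')"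
    using eq_ab ab by simp
  have "funpow_orbit \<sigma> x = funpow_orbit \<sigma> x'"
    using funpow_orbit_rep[OF x(1), of i] funpow_orbit_rep[OF x(3), of j] eq by simp
  then have "orbit_rep x = orbit_rep x'"
    unfolding orbit_rep_def by simp
  moreover have "i = j"
    using funpow_eq_imp_eq[OF orbit_rep_in[OF x(1)] x(2,4)] eq calculation by simp
  ultimately show "a = b"
    using ab by simp
qed

lemma image_orbit_reps: "(\<lambda>(\<rho>, j). (\<sigma> ^^ j) \<rho>) ` (orbit_rep ` P \<times> {0..<n}) = P"
proof (intro equalityI subsetI)
  fix x assume x: "x \<in> P"
  then have "x \<in> funpow_orbit \<sigma> (orbit_rep x)"
    using funpow_orbit_eq[OF period[OF x] length_pos orbit_rep_in_orbit] self_in_funpow_orbit by simp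
  then obtain k where "x = (\<sigma> ^^ k) (orbit_rep x)"
    unfolding funpow_orbit_def by blast
  also have "\<dots> = (\<sigma> ^^ (k mod n)) (orbit_rep x)"
    using funpow_mod_eq[OF period[OF orbit_rep_in[OF x]]] by simp
  finally show "x \<in> (\<lambda>(\<rho>, j). (\<sigma> ^^ j) \<rho>) ` (orbit_rep ` P \<times> {0..<n})"
    using x length_pos by force
qed (use funpow_closed orbit_rep_in in auto)

lemma fg_iso_cycles:
  assumes "finite P"
  shows "fg_iso P \<sigma> ({0..<card P div n} \<times> {0..<n}) (map_prod id (\<lambda>j. Suc j mod n))"
proof -
  define R where "R = orbit_rep ` P"
  have R: "bij_betw (\<lambda>(\<rho>, j). (\<sigma> ^^ j) \<rho>) (R \<times> {0..<n}) P"
    unfolding R_def using inj_on_orbit_reps image_orbit_reps by (rule bij_betw_imageI)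
  have "card P = card R * n"
    using bij_betw_same_card[OF R] by (simp add: card_cartesian_product)
  then have card: "card P div n = card R"
    using length_pos by simp
  obtain e where e: "bij_betw e {0..<card R} R"
    using ex_bij_betw_nat_finite assms unfolding R_def by blast
  have "fg_iso ({0..<card R} \<times> {0..<n}) (map_prod id (\<lambda>j. Suc j mod n)) P \<sigma>"
  proof (rule fg_isoI[OF bij_betw_trans[OF bij_betw_map_prod[OF e bij_betw_id] R]])
    fix x assume "x \<in> {0..<card R} \<times> {0..<n}"
    then obtain k j where x: "x = (k, j)" "k < card R"
      by auto
    have "e k \<in> R"
      using bij_betwE[OF e] x(2) by simp
    then have "e k \<in> P"
      unfolding R_def using orbit_rep_in by (elim imageE) simp
    then have "(\<sigma> ^^ (Suc j mod n)) (e k) = (\<sigma> ^^ Suc j) (e k)"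
      by (rule funpow_mod_eq[OF period])
    then show "((\<lambda>(\<rho>, j). (\<sigma> ^^ j) \<rho>) \<circ> map_prod e id) (map_prod id (\<lambda>j. Suc j mod n) x) =
               \<sigma> (((\<lambda>(\<rho>, j). (\<sigma> ^^ j) \<rho>) \<circ> map_prod e id) x)"
      using x by simp
  qed
  then show ?thesis
    unfolding card by (rule fg_iso_sym) (auto simp: length_pos)
qed

end

section \<open>Doubling modulo an odd number\<close>

lemma div_div_self_nat: "0 < m \<Longrightarrow> d dvd m \<Longrightarrow> m div (m div d) = d" for m d :: nat
  by (metis dvd_div_eq_0_iff dvd_div_mult_self nonzero_mult_div_cancel_left zero_less_iff_neq_zero)

lemma pow_mult_mod_eq_self_iff:
  fixes a r y :: nat
  assumes "y < r"
  shows "a ^ j * y mod r = y \<longleftrightarrow> ord (r div gcd y r) a dvd j"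
proof -
  define g where "g = gcd y r"
  define d where "d = r div g"
  define u where "u = y div g"
  have g: "g > 0"
    using assms unfolding g_def by simp
  have y: "y = u * g" and r: "r = d * g"
    unfolding u_def d_def g_def by simp_all
  have "coprime u d"
    unfolding u_def d_def g_def using assms by (intro div_gcd_coprime) simp
  have "a ^ j * y mod r = y \<longleftrightarrow> (a ^ j * u mod d) * g = (u mod d) * g"
    using assms by (simp add: y r mod_mult_mult2 mult.assoc flip: mod_less[of y r])
  also have "\<dots> \<longleftrightarrow> [a ^ j * u = 1 * u] (mod d)"
    using g by (simp add: cong_def)
  also have "\<dots> \<longleftrightarrow> [a ^ j = 1] (mod d)"
    using \<open>coprime u d\<close> by (rule cong_mult_rcancel_nat)
  also have "\<dots> \<longleftrightarrow> ord d a dvd j"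
    by (rule ord_divides)
  finally show ?thesis
    unfolding d_def g_def .
qed

lemma card_gcd_class:
  fixes r d :: nat
  assumes r: "r > 0" and d: "d dvd r"
  shows "card {y. y < r \<and> r div gcd y r = d} = totient d"
proof -
  have "r div gcd y r = d \<longleftrightarrow> gcd y r = r div d" for y
    using r d by (metis div_mult_self_is_m dvd_mult_div_cancel dvd_pos_nat gcd_dvd2)
  then have "{y. y < r \<and> r div gcd y r = d} = {y. y < r \<and> gcd y r = r div d}"
    by simp
  also have "bij_betw (\<lambda>y. if y = 0 then r else y) \<dots> {y \<in> {0<..r}. gcd y r = r div d}"
    by (rule bij_betw_byWitness[where f' = "\<lambda>y. if y = r then 0 else y"]) (use r in auto)
  then have "card {y. y < r \<and> gcd y r = r div d} = card {y \<in> {0<..r}. gcd y r = r div d}"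
    by (rule bij_betw_same_card)
  also have "\<dots> = totient d"
    using card_gcd_eq_totient[OF r, of "r div d"] d div_div_self_nat[OF r d] by auto
  finally show ?thesis .
qed

lemma gcd_double_mod:
  fixes r y :: nat
  assumes "odd r"
  shows "gcd (2 * y mod r) r = gcd y r"
proof -
  have "gcd (2 * y mod r) r = gcd (2 * y) r"
    using gcd_red_nat[of "2 * y" r] by (simp add: gcd.commute)
  also have "\<dots> = gcd y r"
    using assms by (intro gcd_mult_left_left_cancel) simp
  finally show ?thesis .
qed

lemma double_mod_gcd_class_closed:
  fixes r :: nat
  assumes "odd r"
  shows "map_prod (\<lambda>y. 2 * y mod r) id ` ({y. y < r \<and> r div gcd y r = d} \<times> W)
           \<subseteq> {y. y < r \<and> r div gcd y r = d} \<times> W"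
  using assms gcd_double_mod[OF assms] by (auto intro!: mod_less_divisor gr0I)

lemma equal_cycles_double_mod_gcd_class:
  fixes r d :: nat and W :: "'b set"
  assumes r: "odd r" and d: "d dvd r"
  shows "equal_cycles (map_prod (\<lambda>y. 2 * y mod r) id) ({y. y < r \<and> r div gcd y r = d} \<times> W) (ord d 2)"
proof
  have "odd d"
    using r d dvd_trans by blast
  then show "ord d 2 > 0"
    by (simp add: ord_eq_0[symmetric])
  have funpow: "(map_prod (\<lambda>y. 2 * y mod r) id ^^ j) (y, w) = (2 ^ j * y mod r, w)"
    if "y < r" for j y and w :: 'b
    using that by (induction j) (simp_all add: mod_mult_right_eq mult.assoc)
  show "(map_prod (\<lambda>y. 2 * y mod r) id ^^ j) x \<noteq> x"
    if "x \<in> {y. y < r \<and> r div gcd y r = d} \<times> W" "0 < j" "j < ord d 2" for x j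
    using that pow_mult_mod_eq_self_iff[of _ r 2 j] by (auto simp: funpow nat_dvd_not_less)
  show "(map_prod (\<lambda>y. 2 * y mod r) id ^^ ord d 2) x = x"
    if "x \<in> {y. y < r \<and> r div gcd y r = d} \<times> W" for x
    using that pow_mult_mod_eq_self_iff[of _ r 2 "ord d 2"] by (auto simp: funpow)
qed (rule double_mod_gcd_class_closed[OF r])

lemma fg_iso_doubling_gcd_class:
  fixes r d :: nat and W :: "'b set"
  assumes r: "odd r" and d: "d dvd r" and W: "finite W"
  shows "fg_iso (({y. y < r \<and> r div gcd y r = d} \<times> W) \<times> tree_verts s)
           (attach_trees (map_prod (\<lambda>y. 2 * y mod r) id))
           (Pair d ` ({0..<card W * totient d div ord d 2} \<times> cyctree_verts (ord d 2) s))
           (\<lambda>(d, k, x). (d, k, cyctree_map (ord d 2) x))"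
proof -
  define C where "C = {y. y < r \<and> r div gcd y r = d}"
  define n where "n = ord d 2"
  define m where "m = card W * totient d div n"
  have "card (C \<times> W) div n = m"
    using card_gcd_class[OF _ d] r by (simp add: C_def m_def card_cartesian_product mult.commute odd_pos)
  moreover have "fg_iso (C \<times> W) (map_prod (\<lambda>y. 2 * y mod r) id)
      ({0..<card (C \<times> W) div n} \<times> {0..<n}) (map_prod id (\<lambda>j. Suc j mod n))"
    using equal_cycles_double_mod_gcd_class[OF r d] unfolding C_def n_def
    by (rule equal_cycles.fg_iso_cycles) (simp add: W)
  ultimately have "fg_iso ((C \<times> W) \<times> tree_verts s) (attach_trees (map_prod (\<lambda>y. 2 * y mod r) id))
      (({0..<m} \<times> {0..<n}) \<times> tree_verts s) (attach_trees (map_prod id (\<lambda>j. Suc j mod n)))"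
    using fg_iso_attach_trees by metis
  also have "fg_iso (({0..<m} \<times> {0..<n}) \<times> tree_verts s) (attach_trees (map_prod id (\<lambda>j. Suc j mod n)))
      ({0..<m} \<times> ({0..<n} \<times> tree_verts s)) (map_prod id (cyctree_map n))"
    unfolding cyctree_map_eq_attach_trees by (rule fg_iso_attach_trees_assoc)
  also have "fg_iso ({0..<m} \<times> ({0..<n} \<times> tree_verts s)) (map_prod id (cyctree_map n))
      (Pair d ` ({0..<m} \<times> cyctree_verts n s)) (\<lambda>(d, k, x). (d, k, cyctree_map (ord d 2) x))"
  proof -
    have map: "(\<lambda>(d, k, x). (d, k, cyctree_map (ord d 2) x))
        = (\<lambda>(j, a). (j, map_prod id (cyctree_map (ord j (2::nat))) a))"
      by auto
    show ?thesis
      unfolding n_def cyctree_verts_def map by (rule fg_iso_Pair)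
  qed
  finally show ?thesis
    unfolding C_def m_def n_def .
qed

lemma fg_iso_doubling_decomposition:
  fixes r :: nat and W :: "'b set"
  assumes r: "odd r" and W: "finite W"
  shows "fg_iso (({0..<r} \<times> W) \<times> tree_verts s) (attach_trees (map_prod (\<lambda>y. 2 * y mod r) id))
           {(d, k, x). d dvd r \<and> k < card W * totient d div ord d 2 \<and> x \<in> cyctree_verts (ord d 2) s}
           (\<lambda>(d, k, x). (d, k, cyctree_map (ord d 2) x))"
proof -
  define V where "V d = ({y. y < r \<and> r div gcd y r = d} \<times> W) \<times> tree_verts s" for d
  define T where
    "T d = Pair d ` ({0..<card W * totient d div ord d 2} \<times> cyctree_verts (ord d 2) s)" for d
  have source: "({0..<r} \<times> W) \<times> tree_verts s = (\<Union>d\<in>{d. d dvd r}. V d)"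
    by (auto simp: V_def) (metis dvd_div_mult_self dvd_triv_left gcd_dvd2)
  have target: "{(d, k, x). d dvd r \<and> k < card W * totient d div ord d 2 \<and> x \<in> cyctree_verts (ord d 2) s}
      = (\<Union>d\<in>{d. d dvd r}. T d)"
    by (auto simp: T_def)
  have "fg_iso (\<Union>d\<in>{d. d dvd r}. V d) (attach_trees (map_prod (\<lambda>y. 2 * y mod r) id))
      (\<Union>d\<in>{d. d dvd r}. T d) (\<lambda>(d, k, x). (d, k, cyctree_map (ord d 2) x))"
  proof (rule fg_iso_UN)
    show "fg_iso (V d) (attach_trees (map_prod (\<lambda>y. 2 * y mod r) id))
        (T d) (\<lambda>(d, k, x). (d, k, cyctree_map (ord d 2) x))" if "d \<in> {d. d dvd r}" for d
      using fg_iso_doubling_gcd_class[OF r _ W] that by (simp add: V_def T_def)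
    show "(\<lambda>((y, w), t). r div gcd y r) x = d" if "x \<in> V d" for d x
      using that by (auto simp: V_def)
    show "attach_trees (map_prod (\<lambda>y. 2 * y mod r) id) ` V d \<subseteq> V d" for d
      unfolding V_def by (rule attach_trees_closed[OF double_mod_gcd_class_closed[OF r]])
    show "disjoint_family_on T {d. d dvd r}"
      by (auto simp: disjoint_family_on_def T_def)
  qed
  then show ?thesis
    unfolding source target .
qed

section \<open>Finite fields\<close>

lemma Units_cring_class_ops: "x \<in> Units cring_class_ops \<longleftrightarrow> x \<noteq> (0::'a::field)"
  unfolding Units_def by (auto intro!: bexI[of _ "inverse x"] simp: class_simps)

lemma field_cring_class_ops: "field (cring_class_ops :: 'a::field ring)"
proof -
  have "Units (cring_class_ops :: 'a ring) = carrier cring_class_ops - {\<zero>\<^bsub>cring_class_ops\<^esub>}"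
    by (rule Set.set_eqI)
      (simp only: Units_cring_class_ops carrier_class zero_class Diff_iff singleton_iff simp_thms)
  then show ?thesis
    by (rule cring.cring_fieldI[OF cring_class])
qed

lemma mult_of_cring_class_ops:
  fixes x :: "'a::{finite,field}"
  shows "carrier (mult_of (cring_class_ops :: 'a ring)) = UNIV - {0}"
    and "x [^]\<^bsub>mult_of cring_class_ops\<^esub> (n::nat) = x ^ n"
    and "\<one>\<^bsub>mult_of (cring_class_ops :: 'a ring)\<^esub> = 1"
    and "Coset.order (mult_of (cring_class_ops :: 'a ring)) = card (UNIV :: 'a set) - 1"
  by (simp_all add: nat_pow_mult_of power_class Coset.order_def)
    (simp_all add: cring_class_ops_def card_Diff_singleton)

lemma card_finite_field_ge_2: "2 \<le> card (UNIV :: 'a::{finite,field} set)"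
proof -
  have "card {0 :: 'a, 1} \<le> card (UNIV :: 'a set)"
    by (rule card_mono) simp_all
  then show ?thesis
    by simp
qed

lemma finite_field_power_card: "x ^ card (UNIV :: 'a set) = (x::'a::{finite,field})"
proof (cases "x = 0")
  case False
  interpret G: group "mult_of (cring_class_ops :: 'a ring)"
    by (rule field.field_mult_group[OF field_cring_class_ops])
  have "x ^ (card (UNIV :: 'a set) - 1) = 1"
    using G.pow_order_eq_1[of x] False unfolding mult_of_cring_class_ops by simp
  moreover have "card (UNIV :: 'a set) = Suc (card (UNIV :: 'a set) - 1)"
    using finite_UNIV_card_ge_0[where ?'a = 'a] by simp
  ultimately show ?thesis
    by (metis power_Suc mult_1_right)
qed (simp add: finite_UNIV_card_ge_0)

lemma finite_field_primitive_element:
  "\<exists>a :: 'a::{finite,field}. \<forall>k. a ^ k = 1 \<longleftrightarrow> card (UNIV :: 'a set) - 1 dvd k"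
proof -
  let ?G = "mult_of (cring_class_ops :: 'a ring)"
  interpret G: group ?G
    by (rule field.field_mult_group[OF field_cring_class_ops])
  have fin: "finite (carrier ?G)"
    by simp
  have "finite (carrier (cring_class_ops :: 'a ring))"
    by (simp add: carrier_class)
  then have "\<exists>a\<in>carrier ?G. carrier ?G = {a [^]\<^bsub>cring_class_ops\<^esub> i | i::nat. i \<in> UNIV}"
    by (rule field.finite_field_mult_group_has_gen[OF field_cring_class_ops])
  then obtain a where a: "a \<in> carrier ?G" and gen: "carrier ?G = {a [^]\<^bsub>?G\<^esub> i | i::nat. i \<in> UNIV}"
    by (auto simp: nat_pow_mult_of)
  have "carrier ?G = (\<lambda>i. a [^]\<^bsub>?G\<^esub> i) ` {0..G.ord a - 1}"
    unfolding gen G.ord_elems[OF fin a] by blast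
  then have "Coset.order ?G = card ((\<lambda>i. a [^]\<^bsub>?G\<^esub> i) ` {0..G.ord a - 1})"
    unfolding Coset.order_def by simp
  also have "\<dots> \<le> card {0..G.ord a - 1}"
    by (rule card_image_le) simp
  also have "\<dots> = G.ord a"
    using G.ord_ge_1[OF fin a] by simp
  finally have "G.ord a = Coset.order ?G"
    using G.ord_le_group_order[OF fin a] by simp
  then have "a ^ k = 1 \<longleftrightarrow> card (UNIV :: 'a set) - 1 dvd k" for k
    using G.pow_eq_id[OF a, of k] unfolding mult_of_cring_class_ops by simp
  then show ?thesis
    by blast
qed

lemma finite_field_element_of_order:
  assumes "d dvd card (UNIV :: 'a set) - 1"
  shows "\<exists>g :: 'a::{finite,field}. \<forall>k. g ^ k = 1 \<longleftrightarrow> d dvd k"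
proof -
  obtain a :: 'a where a: "\<And>k. a ^ k = 1 \<longleftrightarrow> card (UNIV :: 'a set) - 1 dvd k"
    using finite_field_primitive_element by blast
  obtain e where e: "card (UNIV :: 'a set) - 1 = d * e"
    using assms by blast
  then have "e > 0"
    using card_finite_field_ge_2[where ?'a = 'a] by (cases e) auto
  then have "(a ^ e) ^ k = 1 \<longleftrightarrow> d dvd k" for k
    using a[of "e * k", unfolded e] by (simp add: power_mult mult.commute)
  then show ?thesis
    by blast
qed

lemma fg_iso_powers:
  fixes g :: "'a::monoid_mult"
  assumes order: "\<And>k. g ^ k = 1 \<longleftrightarrow> N dvd k"
  shows "fg_iso {0..<N} (\<lambda>k. m * k mod N) ((\<lambda>k. g ^ k) ` {0..<N}) (\<lambda>a. a ^ m)"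
proof (rule fg_isoI[of "\<lambda>k. g ^ k"])
  have "g ^ N = 1"
    using order by simp
  have pow_mod: "g ^ (k mod N) = g ^ k" for k
  proof -
    have "g ^ k = (g ^ N) ^ (k div N) * g ^ (k mod N)"
      by (simp flip: power_mult power_add)
    then show ?thesis
      using \<open>g ^ N = 1\<close> by simp
  qed
  have same: "i = j" if "i \<le> j" "j < N" "g ^ i = g ^ j" for i j
  proof -
    have "g ^ (N - i + j) = g ^ (N - i + i)"
      using that(3) by (simp add: power_add)
    also have "\<dots> = 1"
      using that(1,2) order by simp
    finally have "N dvd N + (j - i)"
      using that(1,2) order by simp
    then have "N dvd j - i"
      by simp
    then show ?thesis
      using that(1,2) nat_dvd_not_less[of "j - i" N] by linarith
  qed
  show "bij_betw (\<lambda>k. g ^ k) {0..<N} ((\<lambda>k. g ^ k) ` {0..<N})"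
  proof (rule inj_on_imp_bij_betw, rule inj_onI)
    fix i j assume "i \<in> {0..<N}" "j \<in> {0..<N}" "g ^ i = g ^ j"
    then show "i = j"
      using same[of i j] same[of j i] by (cases "i \<le> j") auto
  qed
  show "g ^ (m * k mod N) = (g ^ k) ^ m" for k
    by (simp add: pow_mod power_mult mult.commute)
qed

lemma card_roots_binomial_le:
  fixes a b :: "'a::field"
  assumes "q > 1"
  shows "card {x. x ^ q + a * x + b = 0} \<le> q"
proof -
  define P where "P = monom 1 q + [:b, a:]"
  have "degree [:b, a:] < degree (monom (1::'a) q)"
    using assms by (simp add: degree_monom_eq)
  then have degree: "degree P = q"
    unfolding P_def by (simp add: degree_add_eq_left degree_monom_eq)
  then have "P \<noteq> 0"
    using assms by auto
  have "{x. x ^ q + a * x + b = 0} = {x. poly P x = 0}"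
    unfolding P_def by (auto simp: poly_monom algebra_simps)
  then show ?thesis
    using card_poly_roots_bound[OF \<open>P \<noteq> 0\<close>] degree by simp
qed

lemma CHAR_eq_prime_of_card:
  assumes "prime p" "n > 0" "card (UNIV :: 'a::{finite,field} set) = p ^ n"
  shows "CHAR('a) = p"
proof -
  have "prime CHAR('a)"
    by (rule prime_CHAR_semidom) (simp add: finite_imp_CHAR_pos)
  moreover have "CHAR('a) dvd p ^ n"
    using CHAR_dvd_CARD[where ?'a = 'a] assms(3) by simp
  ultimately show ?thesis
    using assms(1) by (metis prime_dvd_power primes_dvd_imp_eq)
qed

section \<open>The map \<open>c (X ^ (q + 1) + X ^ 2)\<close>\<close>

lemma bounded_square_split_eq:
  fixes q k u l :: nat
  assumes "q \<ge> 2" "k \<le> q" "u \<le> q - 1" "l \<le> q" "q ^ 2 = k + u * l"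
  shows "k = q \<and> u = q - 1 \<and> l = q"
proof -
  have square: "q ^ 2 = q + (q - 1) * q"
    using assms(1) by (simp add: power2_eq_square algebra_simps)
  have "u * l \<le> (q - 1) * q"
    using assms(3,4) by (rule mult_le_mono)
  then have "k = q" and ul: "u * l = (q - 1) * q"
    using assms(2,5) square by linarith+
  moreover have u: "u = q - 1"
  proof (rule ccontr)
    assume "u \<noteq> q - 1"
    then have "u * l \<le> (q - 2) * q"
      using assms(3,4) by (intro mult_le_mono) linarith+
    moreover have "(q - 2) * q < (q - 1) * q"
      using assms(1) by simp
    ultimately show False
      using ul by linarith
  qed
  moreover have "l = q"
    using ul assms(1) unfolding u by simp
  ultimately show ?thesis
    by simp
qed

lemma fg_iso_zstar:
  assumes "finite K" "card K = q" "z \<in> K"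
  shows "fg_iso K (\<lambda>_. z) (zstar_verts q) zstar_map"
proof -
  obtain e where e: "bij_betw e (K - {z}) {0..<card (K - {z})}"
    using ex_bij_betw_finite_nat assms(1) by blast
  have card: "card (K - {z}) = q - 1"
    using assms by simp
  have "bij_betw (\<lambda>x. if x = z then 0 else Suc (e x)) K {0..<q}"
  proof (rule bij_betw_of_inj_on_card)
    show "inj_on (\<lambda>x. if x = z then 0 else Suc (e x)) K"
      using e by (auto simp: inj_on_def bij_betw_def)
    show "(\<lambda>x. if x = z then 0 else Suc (e x)) ` K \<subseteq> {0..<q}"
    proof (rule image_subsetI)
      fix x assume x: "x \<in> K"
      show "(if x = z then 0 else Suc (e x)) \<in> {0..<q}"
      proof (cases "x = z")
        case False
        then have "e x < q - 1"
          using bij_betwE[OF e] card x by auto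
        then show ?thesis
          using False by simp
      qed (use assms in \<open>auto simp: card_gt_0_iff\<close>)
    qed
  qed (use assms in simp_all)
  then show ?thesis
    unfolding zstar_verts_def by (rule fg_isoI) (simp add: zstar_map_def)
qed

lemma target_map_eq:
  "target_map q s = map_sum zstar_map (\<lambda>(d, k, x). (d, k, cyctree_map (ord d 2) x))"
proof
  fix v
  show "target_map q s v = map_sum zstar_map (\<lambda>(d, k, x). (d, k, cyctree_map (ord d 2) x)) v"
    by (cases v) auto
qed

locale quadratic_extension =
  fixes q :: nat and c :: "'a::{finite,field}"
  assumes card_UNIV: "card (UNIV :: 'a set) = q ^ 2"
    and frobenius_add: "\<And>x y :: 'a. (x + y) ^ q = x ^ q + y ^ q"
    and odd_q: "odd q"
    and c_nonzero: "c \<noteq> 0"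
    and c_fixed: "c ^ q = c"
begin

definition Fq_units :: "'a set" where "Fq_units = {a. a ^ q = a \<and> a \<noteq> 0}"

definition trace_kernel :: "'a set" where "trace_kernel = {x. x ^ q + x = 0}"

definition trace_fibre :: "'a set" where "trace_fibre = {w. w ^ q + w = inverse c}"

definition trace_split :: "'a \<Rightarrow> 'a + 'a \<times> 'a" where
  "trace_split x =
     (if x ^ q + x = 0 then Inl x else Inr (c * (x ^ q + x), x / (c * (x ^ q + x))))"

lemma q_ge_3: "3 \<le> q"
proof -
  have "q \<noteq> 1"
    using card_UNIV card_finite_field_ge_2[where ?'a = 'a] by auto
  then show ?thesis
    using odd_q by presburger
qed

lemma frobenius_frobenius: "(x ^ q) ^ q = (x :: 'a)"
  using finite_field_power_card[of x] by (simp add: card_UNIV power2_eq_square flip: power_mult)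

lemma trace_fixed: "(x ^ q + x) ^ q = x ^ q + (x :: 'a)"
  by (simp add: frobenius_add frobenius_frobenius add.commute)

lemma trace_scale: "a ^ q = a \<Longrightarrow> (a * x) ^ q + a * x = a * (x ^ q + (x :: 'a))"
  by (simp add: power_mult_distrib algebra_simps)

lemma trace_split_mem: "trace_split x \<in> Inl ` trace_kernel \<union> Inr ` (Fq_units \<times> trace_fibre)"
proof -
  define t where "t = x ^ q + x"
  show ?thesis
  proof (cases "t = 0")
    case True
    then show ?thesis
      by (simp add: trace_split_def trace_kernel_def t_def)
  next
    case False
    have t: "t ^ q = t"
      unfolding t_def by (rule trace_fixed)
    then have unit: "c * t \<in> Fq_units"
      using False c_nonzero c_fixed by (simp add: Fq_units_def power_mult_distrib)
    have "(x / (c * t)) ^ q + x / (c * t) = (x ^ q + x) / (c * t)"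
      using c_fixed t by (simp add: power_divide power_mult_distrib add_divide_distrib)
    also have "\<dots> = inverse c"
      using False c_nonzero unfolding t_def[symmetric] by (simp add: field_simps)
    finally have "x / (c * t) \<in> trace_fibre"
      unfolding trace_fibre_def by simp
    then show ?thesis
      using False unit by (simp add: trace_split_def flip: t_def)
  qed
qed

lemma trace_split_join:
  assumes "z \<in> Inl ` trace_kernel \<union> Inr ` (Fq_units \<times> trace_fibre)"
  shows "trace_split (case_sum id (\<lambda>(a, w). a * w) z) = z"
  using assms
proof (elim UnE imageE)
  fix x assume "z = Inl x" "x \<in> trace_kernel"
  then show ?thesis
    by (simp add: trace_split_def trace_kernel_def)
next
  fix y assume y: "z = Inr y" "y \<in> Fq_units \<times> trace_fibre"
  then obtain a w where aw: "y = (a, w)" "a ^ q = a" "a \<noteq> 0" "w ^ q + w = inverse c"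
    by (auto simp: Fq_units_def trace_fibre_def)
  then have "(a * w) ^ q + a * w = a * inverse c"
    using trace_scale[of a w] by simp
  then show ?thesis
    using y aw c_nonzero by (simp add: trace_split_def)
qed

lemma bij_betw_trace_split:
  "bij_betw trace_split UNIV (Inl ` trace_kernel \<union> Inr ` (Fq_units \<times> trace_fibre))"
proof (rule bij_betw_byWitness[where f' = "case_sum id (\<lambda>(a, w). a * w)"])
  show "\<forall>x\<in>UNIV. case_sum id (\<lambda>(a, w). a * w) (trace_split x) = x"
    using c_nonzero by (simp add: trace_split_def)
  show "\<forall>z\<in>Inl ` trace_kernel \<union> Inr ` (Fq_units \<times> trace_fibre).
          trace_split (case_sum id (\<lambda>(a, w). a * w) z) = z"
    using trace_split_join by blast
  show "trace_split ` UNIV \<subseteq> Inl ` trace_kernel \<union> Inr ` (Fq_units \<times> trace_fibre)"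
    using trace_split_mem by blast
qed simp

lemma fg_iso_trace_split:
  "fg_iso UNIV (\<lambda>x. c * (x ^ (q + 1) + x ^ 2))
     (Inl ` trace_kernel \<union> Inr ` (Fq_units \<times> trace_fibre)) (map_sum (\<lambda>_. 0) (map_prod (\<lambda>a. a ^ 2) id))"
proof (rule fg_isoI[OF bij_betw_trace_split])
  fix x :: 'a
  define t where "t = x ^ q + x"
  have f: "c * (x ^ (q + 1) + x ^ 2) = (c * t) * x"
    unfolding t_def by (simp add: algebra_simps power2_eq_square)
  have "(c * t) ^ q = c * t"
    using c_fixed trace_fixed by (simp add: power_mult_distrib t_def)
  then have trace_f: "((c * t) * x) ^ q + (c * t) * x = c * t * t"
    by (simp add: trace_scale t_def)
  show "trace_split (c * (x ^ (q + 1) + x ^ 2)) = map_sum (\<lambda>_. 0) (map_prod (\<lambda>a. a ^ 2) id) (trace_split x)"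
  proof (cases "t = 0")
    case True
    have "trace_split 0 = Inl 0"
      using q_ge_3 by (simp add: trace_split_def)
    moreover have "trace_split x = Inl x"
      using True by (simp add: trace_split_def t_def)
    ultimately show ?thesis
      unfolding f using True by simp
  next
    case False
    have "trace_split x = Inr (c * t, x / (c * t))"
      using False by (simp add: trace_split_def t_def)
    moreover have "trace_split ((c * t) * x) = Inr (c * (c * t * t), (c * t) * x / (c * (c * t * t)))"
      using trace_f False c_nonzero by (simp add: trace_split_def)
    ultimately show ?thesis
      unfolding f using False c_nonzero by (simp add: power2_eq_square)
  qed
qed

lemma card_trace_kernel: "card trace_kernel = q"
  and card_Fq_units: "card Fq_units = q - 1"
  and card_trace_fibre: "card trace_fibre = q"
proof -
  have "q > 1"
    using q_ge_3 by simp
  have "card trace_kernel \<le> q"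
    using card_roots_binomial_le[OF \<open>q > 1\<close>, of 1 0] by (simp add: trace_kernel_def)
  moreover have "card trace_fibre \<le> q"
    using card_roots_binomial_le[OF \<open>q > 1\<close>, of 1 "- inverse c"] by (simp add: trace_fibre_def)
  moreover have "card Fq_units \<le> q - 1"
  proof -
    have "Fq_units = {a. a ^ q + (- 1) * a + 0 = 0} - {0}"
      by (auto simp: Fq_units_def)
    moreover have "card {a :: 'a. a ^ q + (- 1) * a + 0 = 0} \<le> q"
      by (rule card_roots_binomial_le[OF \<open>q > 1\<close>])
    moreover have "(0 :: 'a) \<in> {a. a ^ q + (- 1) * a + 0 = 0}"
      using \<open>q > 1\<close> by simp
    ultimately show ?thesis
      by (simp add: card_Diff_singleton)
  qed
  moreover have "q ^ 2 = card trace_kernel + card Fq_units * card trace_fibre"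
  proof -
    have "q ^ 2 = card (Inl ` trace_kernel \<union> Inr ` (Fq_units \<times> trace_fibre))"
      using bij_betw_same_card[OF bij_betw_trace_split] card_UNIV by simp
    also have "\<dots> = card trace_kernel + card Fq_units * card trace_fibre"
      by (subst card_Un_disjoint) (auto simp: card_image card_cartesian_product)
    finally show ?thesis .
  qed
  ultimately have "card trace_kernel = q \<and> card Fq_units = q - 1 \<and> card trace_fibre = q"
    using q_ge_3 by (intro bounded_square_split_eq) simp_all
  then show "card trace_kernel = q" "card Fq_units = q - 1" "card trace_fibre = q"
    by simp_all
qed

lemma fg_iso_Fq_units_squaring:
  "fg_iso Fq_units (\<lambda>a. a ^ 2) {0..<q - 1} (\<lambda>k. 2 * k mod (q - 1))"
proof -
  have "card (UNIV :: 'a set) - 1 = (q - 1) * (q + 1)"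
    using q_ge_3 card_UNIV by (cases q) (simp_all add: power2_eq_square)
  then have "q - 1 dvd card (UNIV :: 'a set) - 1"
    by simp
  then obtain g :: 'a where order: "\<And>k. g ^ k = 1 \<longleftrightarrow> q - 1 dvd k"
    using finite_field_element_of_order by blast
  have "g ^ (q - 1) = 1"
    using order by simp
  then have "g \<noteq> 0"
    using q_ge_3 by (auto simp: power_0_left)
  have powers_in: "(\<lambda>k. g ^ k) ` {0..<q - 1} \<subseteq> Fq_units"
  proof (rule image_subsetI)
    fix k
    have "(g ^ k) ^ q = (g ^ (q - 1)) ^ k * g ^ k"
      using q_ge_3 by (simp flip: power_mult power_add) (simp add: algebra_simps)
    then show "g ^ k \<in> Fq_units"
      using \<open>g ^ (q - 1) = 1\<close> \<open>g \<noteq> 0\<close> by (simp add: Fq_units_def)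
  qed
  have powers: "fg_iso {0..<q - 1} (\<lambda>k. 2 * k mod (q - 1)) ((\<lambda>k. g ^ k) ` {0..<q - 1}) (\<lambda>a. a ^ 2)"
    by (rule fg_iso_powers) (rule order)
  have "(\<lambda>k. g ^ k) ` {0..<q - 1} = Fq_units"
    using card_subset_eq[OF _ powers_in] fg_iso_card[OF powers] card_Fq_units by simp
  then have "fg_iso {0..<q - 1} (\<lambda>k. 2 * k mod (q - 1)) Fq_units (\<lambda>a. a ^ 2)"
    using powers by simp
  then show ?thesis
    by (rule fg_iso_sym) auto
qed

lemma fg_iso_Fq_units_times_trace_fibre:
  assumes q: "q - 1 = 2 ^ s * r" and r: "odd r"
  shows "fg_iso (Fq_units \<times> trace_fibre) (map_prod (\<lambda>a. a ^ 2) id)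
           {(d, k, x). d dvd r \<and> k < q * totient d div ord d 2 \<and> x \<in> cyctree_verts (ord d 2) s}
           (\<lambda>(d, k, x). (d, k, cyctree_map (ord d 2) x))"
proof -
  have "fg_iso Fq_units (\<lambda>a. a ^ 2) {0..<2 ^ s * r} (\<lambda>k. 2 * k mod (2 ^ s * r))"
    using fg_iso_Fq_units_squaring unfolding q .
  then have "fg_iso Fq_units (\<lambda>a. a ^ 2) ({0..<r} \<times> tree_verts s) (attach_trees (\<lambda>y. 2 * y mod r))"
    using fg_iso_doubling_attach_trees[OF r] by (rule fg_iso_trans)
  then have "fg_iso (Fq_units \<times> trace_fibre) (map_prod (\<lambda>a. a ^ 2) id)
      (({0..<r} \<times> tree_verts s) \<times> trace_fibre) (map_prod (attach_trees (\<lambda>y. 2 * y mod r)) id)"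
    by (rule fg_iso_map_prod[OF _ fg_iso_refl])
  also have "fg_iso (({0..<r} \<times> tree_verts s) \<times> trace_fibre) (map_prod (attach_trees (\<lambda>y. 2 * y mod r)) id)
      (({0..<r} \<times> trace_fibre) \<times> tree_verts s) (attach_trees (map_prod (\<lambda>y. 2 * y mod r) id))"
    by (rule fg_iso_attach_trees_param)
  also have "fg_iso (({0..<r} \<times> trace_fibre) \<times> tree_verts s) (attach_trees (map_prod (\<lambda>y. 2 * y mod r) id))
      {(d, k, x). d dvd r \<and> k < q * totient d div ord d 2 \<and> x \<in> cyctree_verts (ord d 2) s}
      (\<lambda>(d, k, x). (d, k, cyctree_map (ord d 2) x))"
    using fg_iso_doubling_decomposition[OF r, of trace_fibre s] card_trace_fibre by simp
  finally show ?thesis .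
qed

theorem fg_iso_target:
  assumes "q - 1 = 2 ^ s * r" and "odd r"
  shows "fg_iso UNIV (\<lambda>x. c * (x ^ (q + 1) + x ^ 2)) (target_verts q s r) (target_map q s)"
proof -
  have "fg_iso trace_kernel (\<lambda>_. 0) (zstar_verts q) zstar_map"
    by (rule fg_iso_zstar[OF finite card_trace_kernel]) (use q_ge_3 in \<open>simp add: trace_kernel_def\<close>)
  then have "fg_iso (Inl ` trace_kernel \<union> Inr ` (Fq_units \<times> trace_fibre))
      (map_sum (\<lambda>_. 0) (map_prod (\<lambda>a. a ^ 2) id)) (target_verts q s r) (target_map q s)"
    unfolding target_verts_def target_map_eq
    using fg_iso_Fq_units_times_trace_fibre[OF assms] by (rule fg_iso_map_sum)
  with fg_iso_trace_split show ?thesis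
    by (rule fg_iso_trans)
qed

end

theorem theorem19:
  fixes c :: "'a::{finite,field}" and p e q s r :: nat
  assumes "prime p" and "odd p" and "e \<ge> 1" and "q = p ^ e"
    and "card (UNIV :: 'a set) = q ^ 2"
    and "q - 1 = 2 ^ s * r" and "odd r"
    and "c \<noteq> 0" and "c ^ q = c"
  shows "fg_iso (UNIV :: 'a set) (\<lambda>x. c * (x ^ (q + 1) + x ^ 2))
           (target_verts q s r) (target_map q s)"
proof -
  have "CHAR('a) = p"
    using assms(1,3-5)
    by (intro CHAR_eq_prime_of_card[where n = "2 * e"]) (simp_all add: power_mult mult.commute)
  have "quadratic_extension q c"
  proof
    show "(x + y) ^ q = x ^ q + y ^ q" for x y :: 'a
      by (rule freshmans_dream'[where n = e]) (simp_all add: \<open>CHAR('a) = p\<close> assms(1,4))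
  qed (use assms in simp_all)
  then show ?thesis
    using assms(6,7) by (rule quadratic_extension.fg_iso_target)
qed

end
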